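(* Let $L=\langle S,A,\to\rangle$ be a labelled transition system. For all $x,y\in\{o,b\}$, the relation $\equiv^{ed}_{E(x,y)}$ is an $(x,y)$-generic bisimulation.
   Context: An LTS is $\langle S,A,\to\rangle$ with states $S$, actions $A$ containing the internal action $\tau$, and $\to\subseteq S\times A\times S$; write $s\xrightarrow{a}t$, and $\twoheadrightarrow$ for the reflexive-transitive closure of $\xrightarrow{\tau}$. For $R\subseteq S\times S$ and $s,s',t$: $s\twoheadrightarrow_{o,R,t}s'$ iff $s\twoheadrightarrow s'$; $s\twoheadrightarrow_{b,R,t}s'$ iff $s\twoheadrightarrow s'$, $t\,R\,s$ and $t\,R\,s'$. For $x,y\in\{o,b\}$, a symmetric $R$ is an $(x,y)$-generic bisimulation if whenever $s\,R\,t$ and $s\xrightarrow{a}s'$, either $a=\tau$ and $s'\,R\,t$, or there exist $t',t_1,t_2$ with $t\twoheadrightarrow_{x,R,s}t_1\xrightarrow{a}t_2\twoheadrightarrow_{y,R,s'}t'$ and $s'\,R\,t'$. Game with explicit divergence. Let $\frown,\smile$ be formal tags and $E\subseteq\{\frown,\smile\}$. Spoiler-owned configurations $\langle (s,t),c,m,r\rangle_S$ and Duplicator-owned $\langle (s,t),c,m,r\rangle_D$ have $(s,t)\in S\times S$, $c\in (A\times S)\cup\{\dagger\}$, $m\in (S\times\{\frown,\smile\})\cup\{\dagger\}$, $r\in\{*,\checkmark\}$. From $\langle (s,t),c,m,r\rangle_S$ Spoiler may: (S1) move to $\langle (s,t),c,m,*\rangle_D$ if $c\neq\dagger$; (S2a)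 for some $s\xrightarrow{a}s'$, move to $\langle (s,t),(a,s'),(t,\frown),*\rangle_D$ if $c=\dagger$; (S2b) for some $s\xrightarrow{a}s'$, move to $\langle (s,t),(a,s'),(t,\frown),\checkmark\rangle_D$ if $c\neq (a,s')$; (S3) for some $t\xrightarrow{a}t'$, move to $\langle (t,s),(a,t'),(s,\frown),\checkmark\rangle_D$. From $\langle (u,v),(a,u'),(\bar v,f),r\rangle_D$ Duplicator may: (D1) move to $\langle (u',\bar v),\dagger,\dagger,*\rangle_S$ if $a=\tau$; (D2) if $f=\frown$ and $\bar v\xrightarrow{a}v'$: (a) move to $\langle (u',v'),(a,u'),(v',\smile),*\rangle_S$, or (b) move to $\langle (u',v'),\dagger,\dagger,\checkmark\rangle_S$, or (c) only if $\smile\in E$, move to $\langle (u,v),(a,u'),(v',\smile),*\rangle_S$; (D3) for some $\bar v\xrightarrow{\tau}v'$: (a) move to $\langle (u,v'),(a,u'),(v',f),*\rangle_S$, or (b) only if $f=\smile$, move to $\langle (u',v'),\dagger,\dagger,\checkmark\rangle_S$, or (c) only if $f\in E$, move to $\langle (u,v),(a,u'),(v',f),*\rangle_S$. Duplicator wins a finite play if Spoiler gets stuck, and an infinite play if it has infinitely many $\checkmark$ rewards; other plays are won by Spoiler. $s\equiv^{ed}_E t$ iff Duplicator has a strategy winning all plays from $\langle (s,t),\dagger,\dagger,*\rangle_S$. $E(x,y)$ is the smallest set with $\frown\in E(o,y)$ and $\smile\in E(x,o)$ for all $x,y\in\{o,b\}$. *)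

theory Defs
  imports Main
begin

text \<open>An LTS over states 's and actions 'a is given by a transition predicate
  tr s a s' (meaning s --a--> s') and a designated internal action tau.\<close>

datatype ob = ObO | ObB

datatype tag = Frown | Smile

datatype reward = Star | Check

text \<open>Configurations. None encodes the dagger.  SConf = Spoiler-owned, DConf = Duplicator-owned.\<close>
datatype ('s, 'a) conf =
    SConf "'s \<times> 's" "('a \<times> 's) option" "('s \<times> tag) option" reward
  | DConf "'s \<times> 's" "('a \<times> 's) option" "('s \<times> tag) option" reward

definition tau_steps :: "('s \<Rightarrow> 'a \<Rightarrow> 's \<Rightarrow> bool) \<Rightarrow> 'a \<Rightarrow> 's \<Rightarrow> 's \<Rightarrow> bool" where
  "tau_steps tr tau = (\<lambda>u v. tr u tau v)\<^sup>*\<^sup>*"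

definition wstep :: "('s \<Rightarrow> 'a \<Rightarrow> 's \<Rightarrow> bool) \<Rightarrow> 'a \<Rightarrow> ob \<Rightarrow> ('s \<Rightarrow> 's \<Rightarrow> bool)
    \<Rightarrow> 's \<Rightarrow> 's \<Rightarrow> 's \<Rightarrow> bool" where
  "wstep tr tau x R t s s1 \<longleftrightarrow>
     tau_steps tr tau s s1 \<and> (x = ObB \<longrightarrow> R t s \<and> R t s1)"

definition generic_bisim :: "('s \<Rightarrow> 'a \<Rightarrow> 's \<Rightarrow> bool) \<Rightarrow> 'a \<Rightarrow> ob \<Rightarrow> ob
    \<Rightarrow> ('s \<Rightarrow> 's \<Rightarrow> bool) \<Rightarrow> bool" where
  "generic_bisim tr tau x y R \<longleftrightarrow> symp R \<and>
     (\<forall>s t a s'. R s t \<longrightarrow> tr s a s' \<longrightarrow>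
        (a = tau \<and> R s' t) \<or>
        (\<exists>t' t1 t2. wstep tr tau x R s t t1 \<and> tr t1 a t2
                    \<and> wstep tr tau y R s' t2 t' \<and> R s' t'))"

inductive move :: "('s \<Rightarrow> 'a \<Rightarrow> 's \<Rightarrow> bool) \<Rightarrow> 'a \<Rightarrow> tag set
    \<Rightarrow> ('s, 'a) conf \<Rightarrow> ('s, 'a) conf \<Rightarrow> bool"
  for tr tau E where
  S1: "c \<noteq> None \<Longrightarrow> move tr tau E (SConf (s, t) c m r) (DConf (s, t) c m Star)"
| S2a: "c = None \<Longrightarrow> tr s a s' \<Longrightarrow>
        move tr tau E (SConf (s, t) c m r) (DConf (s, t) (Some (a, s')) (Some (t, Frown)) Star)"
| S2b: "c \<noteq> Some (a, s') \<Longrightarrow> tr s a s' \<Longrightarrow>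
        move tr tau E (SConf (s, t) c m r) (DConf (s, t) (Some (a, s')) (Some (t, Frown)) Check)"
| S3: "tr t a t' \<Longrightarrow>
        move tr tau E (SConf (s, t) c m r) (DConf (t, s) (Some (a, t')) (Some (s, Frown)) Check)"
| D1: "a = tau \<Longrightarrow>
        move tr tau E (DConf (u, v) (Some (a, u')) (Some (vb, f)) r) (SConf (u', vb) None None Star)"
| D2a: "f = Frown \<Longrightarrow> tr vb a v' \<Longrightarrow>
        move tr tau E (DConf (u, v) (Some (a, u')) (Some (vb, f)) r)
          (SConf (u', v') (Some (a, u')) (Some (v', Smile)) Star)"
| D2b: "f = Frown \<Longrightarrow> tr vb a v' \<Longrightarrow>
        move tr tau E (DConf (u, v) (Some (a, u')) (Some (vb, f)) r)
          (SConf (u', v') None None Check)"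
| D2c: "f = Frown \<Longrightarrow> tr vb a v' \<Longrightarrow> Smile \<in> E \<Longrightarrow>
        move tr tau E (DConf (u, v) (Some (a, u')) (Some (vb, f)) r)
          (SConf (u, v) (Some (a, u')) (Some (v', Smile)) Star)"
| D3a: "tr vb tau v' \<Longrightarrow>
        move tr tau E (DConf (u, v) (Some (a, u')) (Some (vb, f)) r)
          (SConf (u, v') (Some (a, u')) (Some (v', f)) Star)"
| D3b: "tr vb tau v' \<Longrightarrow> f = Smile \<Longrightarrow>
        move tr tau E (DConf (u, v) (Some (a, u')) (Some (vb, f)) r)
          (SConf (u', v') None None Check)"
| D3c: "tr vb tau v' \<Longrightarrow> f \<in> E \<Longrightarrow>
        move tr tau E (DConf (u, v) (Some (a, u')) (Some (vb, f)) r)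
          (SConf (u, v) (Some (a, u')) (Some (v', f)) Star)"

fun is_dup :: "('s, 'a) conf \<Rightarrow> bool" where
  "is_dup (SConf _ _ _ _) = False"
| "is_dup (DConf _ _ _ _) = True"

fun rew :: "('s, 'a) conf \<Rightarrow> reward" where
  "rew (SConf _ _ _ r) = r"
| "rew (DConf _ _ _ r) = r"

text \<open>A (history-dependent) Duplicator strategy maps the play so far (a nonempty list of
  configurations, ending in a Duplicator-owned one) to the next configuration.\<close>
type_synonym ('s, 'a) dstrat = "('s, 'a) conf list \<Rightarrow> ('s, 'a) conf"

definition cons_prefix :: "('s \<Rightarrow> 'a \<Rightarrow> 's \<Rightarrow> bool) \<Rightarrow> 'a \<Rightarrow> tag set \<Rightarrow> ('s, 'a) dstrat
    \<Rightarrow> ('s, 'a) conf \<Rightarrow> ('s, 'a) conf list \<Rightarrow> bool" where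
  "cons_prefix tr tau E f c0 p \<longleftrightarrow> p \<noteq> [] \<and> hd p = c0 \<and>
     (\<forall>i. Suc i < length p \<longrightarrow> move tr tau E (p ! i) (p ! Suc i) \<and>
          (is_dup (p ! i) \<longrightarrow> p ! Suc i = f (take (Suc i) p)))"

definition cons_play :: "('s \<Rightarrow> 'a \<Rightarrow> 's \<Rightarrow> bool) \<Rightarrow> 'a \<Rightarrow> tag set \<Rightarrow> ('s, 'a) dstrat
    \<Rightarrow> ('s, 'a) conf \<Rightarrow> (nat \<Rightarrow> ('s, 'a) conf) \<Rightarrow> bool" where
  "cons_play tr tau E f c0 \<pi> \<longleftrightarrow> \<pi> 0 = c0 \<and>
     (\<forall>i. move tr tau E (\<pi> i) (\<pi> (Suc i)) \<and>
          (is_dup (\<pi> i) \<longrightarrow> \<pi> (Suc i) = f (map \<pi> [0..<Suc i])))"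

text \<open>f wins all plays from c0: Duplicator is never stuck (so every finite maximal play
  ends with Spoiler stuck), and every infinite play has infinitely many check rewards.\<close>
definition dup_winning :: "('s \<Rightarrow> 'a \<Rightarrow> 's \<Rightarrow> bool) \<Rightarrow> 'a \<Rightarrow> tag set \<Rightarrow> ('s, 'a) dstrat
    \<Rightarrow> ('s, 'a) conf \<Rightarrow> bool" where
  "dup_winning tr tau E f c0 \<longleftrightarrow>
     (\<forall>p. cons_prefix tr tau E f c0 p \<longrightarrow> is_dup (last p) \<longrightarrow>
          move tr tau E (last p) (f p)) \<and>
     (\<forall>\<pi>. cons_play tr tau E f c0 \<pi> \<longrightarrow> (\<exists>\<^sub>\<infinity>i. rew (\<pi> i) = Check))"

definition equiv_ed :: "('s \<Rightarrow> 'a \<Rightarrow> 's \<Rightarrow> bool) \<Rightarrow> 'a \<Rightarrow> tag set \<Rightarrow> 's \<Rightarrow> 's \<Rightarrow> bool" where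
  "equiv_ed tr tau E s t \<longleftrightarrow>
     (\<exists>f. dup_winning tr tau E f (SConf (s, t) None None Star))"

definition Exy :: "ob \<Rightarrow> ob \<Rightarrow> tag set" where
  "Exy x y = {tg. (tg = Frown \<and> x = ObO) \<or> (tg = Smile \<and> y = ObO)}"

end

theory Submission
  imports Defs
begin

text \<open>Let W be the set of configurations from which Duplicator has a winning strategy, so that
  s \<equiv> t means that the fresh configuration \<langle>(s,t),\<dagger>,\<dagger>,*\<rangle> lies in W. W is closed under
  Spoiler's moves, contains a Duplicator configuration as soon as it contains one of its successors,
  and does not depend on rewards. Symmetry holds because \<langle>(s,t),\<dagger>,\<dagger>\<rangle> and \<langle>(t,s),\<dagger>,\<dagger>\<rangle> offer
  Spoiler the same moves up to rewards.

  For the transfer property let s \<equiv> t and s \<midarrow>a\<rightarrow> s'. Spoiler poses the challenge (a, s') and then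
  keeps re-posing it without earning a reward. A play with finitely many rewards is lost for
  Duplicator, so she can idle by \<tau>-steps only finitely often before answering. The states she passes
  through stay equivalent to s unless Frown \<in> E lets her \<tau>-step without updating the position,
  and the state reached by her a-step is equivalent to s' unless Smile \<in> E.\<close>

lemma INFM_nat_shift: "(\<exists>\<^sub>\<infinity>i. P (i + k)) \<longleftrightarrow> (\<exists>\<^sub>\<infinity>i::nat. P i)"
  by (simp add: frequently_def cofinite_eq_sequentially eventually_sequentially_seg[of "\<lambda>n. \<not> P n"])

lemma map_upt_append:
  assumes "\<And>i. i < length b \<Longrightarrow> \<pi> i = b ! i" and "\<And>j. \<pi> (length b + j) = \<pi>' j"
  shows "map \<pi> [0..<length b + k] = b @ map \<pi>' [0..<k]"
proof (induction k)
  case 0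
  show ?case by (rule nth_equalityI) (simp_all add: assms(1))
next
  case (Suc k)
  then show ?case by (simp add: assms(2))
qed

section \<open>Plays and strategies\<close>

definition prepend_strategy :: "('s, 'a) conf \<Rightarrow> (('s, 'a) conf \<Rightarrow> ('s, 'a) dstrat) \<Rightarrow> ('s, 'a) dstrat"
  where "prepend_strategy c1 G p = (if tl p = [] then c1 else G (hd (tl p)) (tl p))"

context
  fixes tr :: "'s \<Rightarrow> 'a \<Rightarrow> 's \<Rightarrow> bool" and tau :: 'a and E :: "tag set"
begin

lemma cons_prefix_snoc:
  assumes cp: "cons_prefix tr tau E f c0 p" and mv: "move tr tau E (last p) c"
    and st: "is_dup (last p) \<Longrightarrow> c = f p"
  shows "cons_prefix tr tau E f c0 (p @ [c])"
proof -
  have ne: "p \<noteq> []" and hd: "hd p = c0" using cp unfolding cons_prefix_def by auto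
  have "move tr tau E ((p @ [c]) ! i) ((p @ [c]) ! Suc i) \<and>
      (is_dup ((p @ [c]) ! i) \<longrightarrow> (p @ [c]) ! Suc i = f (take (Suc i) (p @ [c])))"
    if i: "Suc i < length (p @ [c])" for i
  proof (cases "Suc i < length p")
    case True
    then show ?thesis using cp unfolding cons_prefix_def by (simp add: nth_append)
  next
    case False
    with i have "Suc i = length p" by simp
    moreover from this[symmetric] ne have "(p @ [c]) ! i = last p" by (simp add: nth_append last_conv_nth)
    ultimately show ?thesis using mv st by simp
  qed
  with ne hd show ?thesis unfolding cons_prefix_def by simp
qed

lemma cons_play_of_prefix_chain:
  assumes cp: "\<And>k. cons_prefix tr tau E f c0 (pre k)"
    and pre0: "pre 0 = [c0]" and preS: "\<And>k. \<exists>c. pre (Suc k) = pre k @ [c]"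
  shows "cons_play tr tau E f c0 (\<lambda>i. last (pre i))"
proof -
  define \<pi> where "\<pi> i = last (pre i)" for i
  have pre: "pre k = map \<pi> [0..<Suc k]" for k
  proof (induction k)
    case 0
    show ?case by (simp add: pre0 \<pi>_def)
  next
    case (Suc k)
    obtain c where "pre (Suc k) = pre k @ [c]" using preS by blast
    with Suc show ?case by (simp add: \<pi>_def)
  qed
  have "move tr tau E (\<pi> i) (\<pi> (Suc i)) \<and> (is_dup (\<pi> i) \<longrightarrow> \<pi> (Suc i) = f (map \<pi> [0..<Suc i]))" for i
    using cp[of "Suc i"] unfolding pre cons_prefix_def
    by (auto simp: take_map simp del: upt_Suc dest!: spec[of _ i])
  moreover have "\<pi> 0 = c0" by (simp add: \<pi>_def pre0)
  ultimately show ?thesis unfolding cons_play_def \<pi>_def by simp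
qed

lemma cons_prefix_append_residual:
  assumes cp: "cons_prefix tr tau E f c0 (b @ [l])"
    and cq: "cons_prefix tr tau E (\<lambda>q. f (b @ q)) l q"
  shows "cons_prefix tr tau E f c0 (b @ q)"
proof -
  have qne: "q \<noteq> []" and q0: "q ! 0 = l" using cq unfolding cons_prefix_def by (auto simp: hd_conv_nth)
  have "hd (b @ q) = c0" using cp qne q0 unfolding cons_prefix_def by (cases b) (auto simp: hd_conv_nth)
  moreover have "move tr tau E ((b @ q) ! i) ((b @ q) ! Suc i) \<and>
      (is_dup ((b @ q) ! i) \<longrightarrow> (b @ q) ! Suc i = f (take (Suc i) (b @ q)))"
    if i: "Suc i < length (b @ q)" for i
  proof (cases "i < length b")
    case True
    have "(b @ q) ! Suc i = (b @ [l]) ! Suc i"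
      using True q0 by (cases "Suc i = length b") (auto simp: nth_append)
    moreover have "(b @ q) ! i = (b @ [l]) ! i" and "take (Suc i) (b @ q) = take (Suc i) (b @ [l])"
      using True by (simp_all add: nth_append)
    moreover have "Suc i < length (b @ [l])" using True by simp
    ultimately show ?thesis using cp unfolding cons_prefix_def by presburger
  next
    case False
    then obtain j where j: "i = length b + j" by (metis le_iff_add not_less)
    with i have "Suc j < length q" by simp
    with cq j show ?thesis unfolding cons_prefix_def by (simp add: nth_append)
  qed
  ultimately show ?thesis using qne unfolding cons_prefix_def by simp
qed

lemma cons_play_append_residual:
  assumes cp: "cons_prefix tr tau E f c0 (b @ [l])"
    and cq: "cons_play tr tau E (\<lambda>q. f (b @ q)) l \<pi>'"
  defines "\<pi> \<equiv> \<lambda>i. if i < length b then b ! i else \<pi>' (i - length b)"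
  shows "cons_play tr tau E f c0 \<pi>"
proof -
  have \<pi>_b: "\<pi> i = b ! i" if "i < length b" for i using that by (simp add: \<pi>_def)
  have \<pi>_\<pi>': "\<pi> (length b + j) = \<pi>' j" for j by (simp add: \<pi>_def)
  have l: "\<pi>' 0 = l" using cq unfolding cons_play_def by simp
  have "\<pi> 0 = c0" using cp l unfolding cons_prefix_def \<pi>_def by (cases b) auto
  moreover have "move tr tau E (\<pi> i) (\<pi> (Suc i)) \<and>
      (is_dup (\<pi> i) \<longrightarrow> \<pi> (Suc i) = f (map \<pi> [0..<Suc i]))" for i
  proof (cases "i < length b")
    case True
    have "\<pi> (Suc i) = (b @ [l]) ! Suc i"
      using True l by (cases "Suc i = length b") (auto simp: \<pi>_def nth_append)
    moreover have "\<pi> i = (b @ [l]) ! i" using True by (simp add: \<pi>_b nth_append)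
    moreover have "map \<pi> [0..<Suc i] = take (Suc i) (b @ [l])"
      using True by (intro nth_equalityI) (auto simp: \<pi>_b nth_append less_Suc_eq)
    moreover have "Suc i < length (b @ [l])" using True by simp
    ultimately show ?thesis using cp unfolding cons_prefix_def by presburger
  next
    case False
    then obtain j where j: "i = length b + j" by (metis le_iff_add not_less)
    have "map \<pi> [0..<Suc i] = b @ map \<pi>' [0..<Suc j]"
      using map_upt_append[OF \<pi>_b \<pi>_\<pi>', of "Suc j"] j by simp
    with cq j show ?thesis unfolding cons_play_def by (simp add: \<pi>_\<pi>'[symmetric])
  qed
  ultimately show ?thesis unfolding cons_play_def by simp
qed

lemma dup_winning_residual:
  assumes w: "dup_winning tr tau E f c0" and cp: "cons_prefix tr tau E f c0 (b @ [l])"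
  shows "dup_winning tr tau E (\<lambda>q. f (b @ q)) l"
  unfolding dup_winning_def
proof (intro conjI allI impI)
  fix q assume cq: "cons_prefix tr tau E (\<lambda>q. f (b @ q)) l q" and "is_dup (last q)"
  moreover have "q \<noteq> []" using cq unfolding cons_prefix_def by simp
  ultimately show "move tr tau E (last q) (f (b @ q))"
    using w cons_prefix_append_residual[OF cp cq] unfolding dup_winning_def by auto
next
  fix \<pi>' assume cq: "cons_play tr tau E (\<lambda>q. f (b @ q)) l \<pi>'"
  define \<pi> where "\<pi> = (\<lambda>i. if i < length b then b ! i else \<pi>' (i - length b))"
  have "\<exists>\<^sub>\<infinity>i. rew (\<pi> i) = Check"
    using w cons_play_append_residual[OF cp cq, folded \<pi>_def] unfolding dup_winning_def by blast
  then have "\<exists>\<^sub>\<infinity>j. rew (\<pi> (j + length b)) = Check"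
    using INFM_nat_shift[of "\<lambda>i. rew (\<pi> i) = Check"] by simp
  then show "\<exists>\<^sub>\<infinity>j. rew (\<pi>' j) = Check" by (simp add: \<pi>_def)
qed

lemma cons_prefix_prepend_strategyD:
  assumes "cons_prefix tr tau E (prepend_strategy c1 G) c0 (c0 # d # q)"
  shows "move tr tau E c0 d" and "is_dup c0 \<Longrightarrow> d = c1"
    and "cons_prefix tr tau E (G d) d (d # q)"
proof -
  have step: "move tr tau E (p ! i) (p ! Suc i) \<and>
      (is_dup (p ! i) \<longrightarrow> p ! Suc i = prepend_strategy c1 G (take (Suc i) p))"
    if "p = c0 # d # q" "Suc i < length p" for p i
    using assms that unfolding cons_prefix_def by blast
  show "move tr tau E c0 d" and "is_dup c0 \<Longrightarrow> d = c1"
    using step[of _ 0] by (auto simp: prepend_strategy_def)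
  have "move tr tau E ((d # q) ! i) ((d # q) ! Suc i) \<and>
      (is_dup ((d # q) ! i) \<longrightarrow> (d # q) ! Suc i = G d (take (Suc i) (d # q)))"
    if "Suc i < length (d # q)" for i
    using step[of _ "Suc i"] that by (simp add: prepend_strategy_def)
  then show "cons_prefix tr tau E (G d) d (d # q)" unfolding cons_prefix_def by simp
qed

lemma cons_play_prepend_strategyD:
  assumes "cons_play tr tau E (prepend_strategy c1 G) c0 \<pi>"
  shows "move tr tau E c0 (\<pi> 1)" and "is_dup c0 \<Longrightarrow> \<pi> 1 = c1"
    and "cons_play tr tau E (G (\<pi> 1)) (\<pi> 1) (\<lambda>i. \<pi> (Suc i))"
proof -
  have step: "move tr tau E (\<pi> i) (\<pi> (Suc i)) \<and>
      (is_dup (\<pi> i) \<longrightarrow> \<pi> (Suc i) = prepend_strategy c1 G (map \<pi> [0..<Suc i]))" for i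
    using assms unfolding cons_play_def by blast
  have \<pi>0: "\<pi> 0 = c0" using assms unfolding cons_play_def by blast
  show "move tr tau E c0 (\<pi> 1)" and "is_dup c0 \<Longrightarrow> \<pi> 1 = c1"
    using step[of 0] \<pi>0 by (auto simp: prepend_strategy_def)
  have "map \<pi> [0..<Suc (Suc i)] = \<pi> 0 # map (\<lambda>i. \<pi> (Suc i)) [0..<Suc i]" for i
    by (simp add: map_upt_Suc del: upt_Suc)
  then have "prepend_strategy c1 G (map \<pi> [0..<Suc (Suc i)]) = G (\<pi> 1) (map (\<lambda>i. \<pi> (Suc i)) [0..<Suc i])" for i
    by (simp add: prepend_strategy_def hd_map del: upt_Suc)
  then show "cons_play tr tau E (G (\<pi> 1)) (\<pi> 1) (\<lambda>i. \<pi> (Suc i))"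
    using step unfolding cons_play_def by simp
qed

lemma dup_winning_prepend_strategy:
  assumes G: "\<And>d. move tr tau E c0 d \<Longrightarrow> (is_dup c0 \<Longrightarrow> d = c1) \<Longrightarrow> dup_winning tr tau E (G d) d"
    and c1: "is_dup c0 \<Longrightarrow> move tr tau E c0 c1"
  shows "dup_winning tr tau E (prepend_strategy c1 G) c0"
  unfolding dup_winning_def
proof (intro conjI allI impI)
  fix p assume cp: "cons_prefix tr tau E (prepend_strategy c1 G) c0 p" and dup: "is_dup (last p)"
  then obtain q where p: "p = c0 # q" unfolding cons_prefix_def by (cases p) auto
  show "move tr tau E (last p) (prepend_strategy c1 G p)"
  proof (cases q)
    case Nil
    with p dup c1 show ?thesis by (simp add: prepend_strategy_def)
  next
    case (Cons d q')
    note D = cons_prefix_prepend_strategyD[OF cp[unfolded p Cons]]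
    with G have "dup_winning tr tau E (G d) d" by blast
    with D(3) dup have "move tr tau E (last (d # q')) (G d (d # q'))"
      unfolding dup_winning_def p Cons by (metis last_ConsR list.discI)
    then show ?thesis by (simp add: p Cons prepend_strategy_def)
  qed
next
  fix \<pi> assume "cons_play tr tau E (prepend_strategy c1 G) c0 \<pi>"
  note D = cons_play_prepend_strategyD[OF this]
  with G have "\<exists>\<^sub>\<infinity>i. rew (\<pi> (Suc i)) = Check" unfolding dup_winning_def by blast
  then show "\<exists>\<^sub>\<infinity>i. rew (\<pi> i) = Check"
    using INFM_nat_shift[of "\<lambda>i. rew (\<pi> i) = Check" 1] by simp
qed

section \<open>The winning region\<close>

definition dup_wins :: "('s, 'a) conf \<Rightarrow> bool"
  where "dup_wins c \<longleftrightarrow> (\<exists>f. dup_winning tr tau E f c)"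

lemma equiv_ed_iff_dup_wins: "equiv_ed tr tau E s t \<longleftrightarrow> dup_wins (SConf (s, t) None None Star)"
  by (simp add: equiv_ed_def dup_wins_def)

lemma dup_wins_last_cons_prefix:
  assumes "dup_winning tr tau E f c0" and "cons_prefix tr tau E f c0 p"
  shows "dup_wins (last p)"
proof -
  have "p = butlast p @ [last p]" using assms(2) unfolding cons_prefix_def by simp
  then show ?thesis using dup_winning_residual assms unfolding dup_wins_def by metis
qed

lemma dup_winning_after_move:
  assumes "dup_winning tr tau E f c" and "move tr tau E c d" and "is_dup c \<Longrightarrow> d = f [c]"
  shows "dup_wins d"
proof -
  have "cons_prefix tr tau E f c [c]" unfolding cons_prefix_def by simp
  then have "cons_prefix tr tau E f c ([c] @ [d])" using assms(2,3) by (intro cons_prefix_snoc) auto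
  from dup_wins_last_cons_prefix[OF assms(1) this] show ?thesis by simp
qed

lemma dup_wins_move_Spoiler: "dup_wins c \<Longrightarrow> \<not> is_dup c \<Longrightarrow> move tr tau E c d \<Longrightarrow> dup_wins d"
  by (metis dup_wins_def dup_winning_after_move)

lemma dup_wins_move_DuplicatorE:
  assumes "dup_wins d" and "is_dup d"
  obtains c where "move tr tau E d c" and "dup_wins c"
proof -
  obtain f where w: "dup_winning tr tau E f d" using assms(1) unfolding dup_wins_def by blast
  have "cons_prefix tr tau E f d [d]" unfolding cons_prefix_def by simp
  with w assms(2) have "move tr tau E d (f [d])" unfolding dup_winning_def by fastforce
  with w show ?thesis using dup_winning_after_move that by blast
qed

lemma dup_wins_SpoilerI:
  assumes "\<not> is_dup c" and "\<And>d. move tr tau E c d \<Longrightarrow> dup_wins d"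
  shows "dup_wins c"
proof -
  have "dup_winning tr tau E (prepend_strategy c (\<lambda>d. SOME g. dup_winning tr tau E g d)) c"
    using assms by (intro dup_winning_prepend_strategy) (auto simp: dup_wins_def, metis someI_ex)
  then show ?thesis unfolding dup_wins_def by blast
qed

lemma dup_wins_DuplicatorI:
  assumes "is_dup d" and "move tr tau E d c" and "dup_wins c"
  shows "dup_wins d"
proof -
  obtain g where "dup_winning tr tau E g c" using assms(3) unfolding dup_wins_def by blast
  then have "dup_winning tr tau E (prepend_strategy c (\<lambda>_. g)) d"
    using assms(1,2) by (intro dup_winning_prepend_strategy) auto
  then show ?thesis unfolding dup_wins_def by blast
qed

lemma move_SConf_reward: "move tr tau E (SConf p c m r) d \<Longrightarrow> move tr tau E (SConf p c m r') d"
  by (erule move.cases) (auto intro: move.intros)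

lemma move_DConf_reward: "move tr tau E (DConf p c m r) d \<Longrightarrow> move tr tau E (DConf p c m r') d"
  by (erule move.cases) (auto intro: move.intros)

lemma dup_wins_SConf_reward: "dup_wins (SConf p c m r) \<Longrightarrow> dup_wins (SConf p c m r')"
  by (rule dup_wins_SpoilerI) (auto intro: dup_wins_move_Spoiler move_SConf_reward)

lemma dup_wins_DConf_reward: "dup_wins (DConf p c m r) \<Longrightarrow> dup_wins (DConf p c m r')"
  by (erule dup_wins_move_DuplicatorE) (auto intro: dup_wins_DuplicatorI move_DConf_reward)

lemma dup_wins_SConf_DConf:
  "dup_wins (SConf p c m r) \<Longrightarrow> move tr tau E (SConf p c m r) (DConf q c' m' r') \<Longrightarrow>
    dup_wins (DConf q c' m' r'')"
  by (metis dup_wins_DConf_reward dup_wins_move_Spoiler is_dup.simps(1))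

lemma dup_wins_play_invariant:
  assumes "dup_wins c0" and "Good c0"
    and Spoiler: "\<And>c. Good c \<Longrightarrow> dup_wins c \<Longrightarrow> \<not> is_dup c \<Longrightarrow> \<exists>d. move tr tau E c d \<and> Good d"
    and Duplicator: "\<And>d c. Good d \<Longrightarrow> is_dup d \<Longrightarrow> move tr tau E d c \<Longrightarrow> dup_wins c \<Longrightarrow> Good c"
  shows "\<exists>\<pi> :: nat \<Rightarrow> ('s, 'a) conf. (\<forall>i. Good (\<pi> i)) \<and> (\<exists>\<^sub>\<infinity>i. rew (\<pi> i) = Check)"
proof -
  obtain f where w: "dup_winning tr tau E f c0" using assms(1) unfolding dup_wins_def by blast
  define nxt where
    "nxt p = (if is_dup (last p) then f p else SOME d. move tr tau E (last p) d \<and> Good d)" for p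
  define pre where "pre k = ((\<lambda>p. p @ [nxt p]) ^^ k) [c0]" for k
  have pre0: "pre 0 = [c0]" and preS: "pre (Suc k) = pre k @ [nxt (pre k)]" for k
    by (simp_all add: pre_def)
  have prefix: "cons_prefix tr tau E f c0 (pre k) \<and> Good (last (pre k))" for k
  proof (induction k)
    case 0
    show ?case using assms(2) by (simp add: pre0 cons_prefix_def)
  next
    case (Suc k)
    define p where "p = pre k"
    have cp: "cons_prefix tr tau E f c0 p" and good: "Good (last p)" using Suc by (simp_all add: p_def)
    have "move tr tau E (last p) (nxt p) \<and> (is_dup (last p) \<longrightarrow> nxt p = f p) \<and> Good (nxt p)"
    proof (cases "is_dup (last p)")
      case True
      then have nxt: "nxt p = f p" and mv: "move tr tau E (last p) (f p)"
        using w cp unfolding nxt_def dup_winning_def by auto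
      have "dup_wins (f p)"
        using dup_wins_last_cons_prefix[OF w cons_prefix_snoc[OF cp mv]] by simp
      with Duplicator[OF good True mv] nxt mv show ?thesis by simp
    next
      case False
      with Spoiler[OF good dup_wins_last_cons_prefix[OF w cp]]
      have "move tr tau E (last p) (nxt p) \<and> Good (nxt p)"
        unfolding nxt_def by simp (rule someI_ex)
      with False show ?thesis by simp
    qed
    with cp show ?case by (simp add: preS p_def[symmetric] cons_prefix_snoc)
  qed
  then have "cons_play tr tau E f c0 (\<lambda>i. last (pre i))"
    using pre0 preS by (intro cons_play_of_prefix_chain) auto
  with w have "\<exists>\<^sub>\<infinity>i. rew (last (pre i)) = Check" unfolding dup_winning_def by blast
  with prefix show ?thesis by (intro exI[of _ "\<lambda>i. last (pre i)"]) simp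
qed

lemma dup_wins_not_trapped:
  assumes "dup_wins c0" and "Inv c0"
    and trap: "\<And>c. Inv c \<Longrightarrow> dup_wins c \<Longrightarrow> \<not> is_dup c \<and>
      (\<exists>d. move tr tau E c d \<and> is_dup d \<and> rew d = Star \<and>
        (\<forall>c'. move tr tau E d c' \<longrightarrow> dup_wins c' \<longrightarrow> Inv c' \<and> rew c' = Star))"
  shows False
proof -
  define Trap where "Trap d \<longleftrightarrow> is_dup d \<and> rew d = Star \<and>
      (\<forall>c'. move tr tau E d c' \<longrightarrow> dup_wins c' \<longrightarrow> Inv c' \<and> rew c' = Star)" for d
  define Good where "Good c \<longleftrightarrow> (if is_dup c then Trap c else Inv c) \<and> rew c = Star" for c
  obtain d0 where "move tr tau E c0 d0" and "Trap d0" and "\<not> is_dup c0"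
    using trap[OF assms(2,1)] unfolding Trap_def by blast
  then have "dup_wins d0" and "Good d0"
    using assms(1) dup_wins_move_Spoiler unfolding Good_def Trap_def by simp_all
  then have "\<exists>\<pi> :: nat \<Rightarrow> ('s, 'a) conf. (\<forall>i. Good (\<pi> i)) \<and> (\<exists>\<^sub>\<infinity>i. rew (\<pi> i) = Check)"
  proof (rule dup_wins_play_invariant)
    fix c assume "Good c" and "dup_wins c" and "\<not> is_dup c"
    then have "Inv c" unfolding Good_def by simp
    with trap[OF this \<open>dup_wins c\<close>] obtain d where "move tr tau E c d" and "Trap d"
      unfolding Trap_def by blast
    moreover from \<open>Trap d\<close> have "Good d" unfolding Good_def Trap_def by simp
    ultimately show "\<exists>d. move tr tau E c d \<and> Good d" by blast
  next
    fix d c assume "Good d" and "is_dup d" and "move tr tau E d c" and "dup_wins c"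
    then have "Inv c" and "rew c = Star" unfolding Good_def Trap_def by simp_all
    moreover have "\<not> is_dup c" using trap \<open>Inv c\<close> \<open>dup_wins c\<close> by blast
    ultimately show "Good c" unfolding Good_def by simp
  qed
  then obtain \<pi> :: "nat \<Rightarrow> ('s, 'a) conf"
    where good: "\<forall>i. Good (\<pi> i)" and "\<exists>\<^sub>\<infinity>i. rew (\<pi> i) = Check" by blast
  then obtain i where "rew (\<pi> i) = Check" by (blast dest: frequently_ex)
  moreover have "rew (\<pi> i) = Star" using good unfolding Good_def by blast
  ultimately show False by simp
qed

lemma dup_wins_repeated_challenge:
  assumes "dup_wins (SConf p0 (Some ch) m0 Star)" and "Inv p0 m0"
    and step: "\<And>p m c. Inv p m \<Longrightarrow> move tr tau E (DConf p (Some ch) m Star) c \<Longrightarrow> dup_wins c \<Longrightarrow>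
      G \<or> (\<exists>p' m'. c = SConf p' (Some ch) m' Star \<and> Inv p' m')"
  shows G
proof (rule ccontr)
  assume "\<not> G"
  show False
  proof (rule dup_wins_not_trapped[where Inv = "\<lambda>c. \<exists>p m. c = SConf p (Some ch) m Star \<and> Inv p m"])
    fix c assume "\<exists>p m. c = SConf p (Some ch) m Star \<and> Inv p m"
    then obtain p m where c: "c = SConf p (Some ch) m Star" and "Inv p m" by blast
    with step \<open>\<not> G\<close> have "\<forall>c'. move tr tau E (DConf p (Some ch) m Star) c' \<longrightarrow> dup_wins c' \<longrightarrow>
        (\<exists>p m. c' = SConf p (Some ch) m Star \<and> Inv p m) \<and> rew c' = Star"
      by fastforce
    moreover have "move tr tau E c (DConf p (Some ch) m Star)" unfolding c by (cases p) (simp add: move.S1)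
    ultimately show "\<not> is_dup c \<and> (\<exists>d. move tr tau E c d \<and> is_dup d \<and> rew d = Star \<and>
        (\<forall>c'. move tr tau E d c' \<longrightarrow> dup_wins c' \<longrightarrow>
          (\<exists>p m. c' = SConf p (Some ch) m Star \<and> Inv p m) \<and> rew c' = Star))"
      unfolding c by fastforce
  qed (use assms in blast)+
qed

section \<open>Challenges\<close>

lemma tau_steps_refl: "tau_steps tr tau v v"
  unfolding tau_steps_def by simp

lemma tau_steps_snoc: "tau_steps tr tau v0 v \<Longrightarrow> tr v tau v' \<Longrightarrow> tau_steps tr tau v0 v'"
  unfolding tau_steps_def by (rule rtranclp.rtrancl_into_rtrancl)

lemma move_SConfE:
  assumes "move tr tau E (SConf (u, v) c m r) d"
  obtains (S1) "c \<noteq> None" "d = DConf (u, v) c m Star"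
  | (S2a) a u' where "c = None" "tr u a u'" "d = DConf (u, v) (Some (a, u')) (Some (v, Frown)) Star"
  | (S2b) a u' where "c \<noteq> Some (a, u')" "tr u a u'"
      "d = DConf (u, v) (Some (a, u')) (Some (v, Frown)) Check"
  | (S3) a v' where "tr v a v'" "d = DConf (v, u) (Some (a, v')) (Some (u, Frown)) Check"
proof -
  from assms show thesis
  proof cases
    case S1 with that(1) show ?thesis by blast
  next
    case S2a with that(2) show ?thesis by blast
  next
    case S2b with that(3) show ?thesis by blast
  next
    case S3 with that(4) show ?thesis by blast
  qed
qed
lemma move_DConfE:
  assumes "move tr tau E (DConf (u, v) (Some (a, u')) (Some (vb, f)) r) d"
  obtains (D1) "a = tau" "d = SConf (u', vb) None None Star"
  | (D2a) v' where "f = Frown" "tr vb a v'" "d = SConf (u', v') (Some (a, u')) (Some (v', Smile)) Star"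
  | (D2b) v' where "f = Frown" "tr vb a v'" "d = SConf (u', v') None None Check"
  | (D2c) v' where "f = Frown" "tr vb a v'" "Smile \<in> E"
      "d = SConf (u, v) (Some (a, u')) (Some (v', Smile)) Star"
  | (D3a) v' where "tr vb tau v'" "d = SConf (u, v') (Some (a, u')) (Some (v', f)) Star"
  | (D3b) v' where "tr vb tau v'" "f = Smile" "d = SConf (u', v') None None Check"
  | (D3c) v' where "tr vb tau v'" "f \<in> E" "d = SConf (u, v) (Some (a, u')) (Some (v', f)) Star"
proof -
  from assms show thesis
  proof cases
    case D1 with that(1) show ?thesis by blast
  next
    case D2a with that(2) show ?thesis by blast
  next
    case D2b with that(3) show ?thesis by blast
  next
    case D2c with that(4) show ?thesis by blast
  next
    case D3a with that(5) show ?thesis by blast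
  next
    case D3b with that(6) show ?thesis by blast
  next
    case D3c with that(7) show ?thesis by blast
  qed
qed

lemma dup_wins_fresh_swap:
  assumes "dup_wins (SConf (s, t) None None r)"
  shows "dup_wins (SConf (t, s) None None r')"
proof (rule dup_wins_SpoilerI)
  fix d assume "move tr tau E (SConf (t, s) None None r') d"
  then show "dup_wins d"
  proof (cases rule: move_SConfE)
    case (S2a a t')
    then show ?thesis using dup_wins_SConf_DConf[OF assms move.S3] by simp
  next
    case (S2b a t')
    then show ?thesis using dup_wins_SConf_DConf[OF assms move.S3] by simp
  next
    case (S3 a s')
    then show ?thesis using dup_wins_SConf_DConf[OF assms move.S2b] by simp
  qed simp
qed simp

lemma dup_wins_Frown_of_fresh:
  assumes "tr u a u'" and "dup_wins (SConf (u, v) None None r)"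
  shows "dup_wins (SConf (u, v) (Some (a, u')) (Some (v, Frown)) r')"
proof (rule dup_wins_SpoilerI)
  fix d assume "move tr tau E (SConf (u, v) (Some (a, u')) (Some (v, Frown)) r') d"
  then show "dup_wins d"
  proof (cases rule: move_SConfE)
    case S1
    then show ?thesis using dup_wins_SConf_DConf[OF assms(2) move.S2a] assms(1) by simp
  next
    case (S2b b u'')
    then show ?thesis using dup_wins_SConf_DConf[OF assms(2) move.S2b] by simp
  next
    case (S3 b v')
    then show ?thesis using dup_wins_SConf_DConf[OF assms(2) move.S3] by simp
  qed simp
qed simp

lemma dup_wins_fresh_of_Frown:
  assumes "tr u a u'" and "dup_wins (SConf (u, v) (Some (a, u')) (Some (v, Frown)) r)"
  shows "dup_wins (SConf (u, v) None None r')"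
proof (rule dup_wins_SpoilerI)
  have repeat: "dup_wins (DConf (u, v) (Some (b, u'')) (Some (v, Frown)) r'')" if "tr u b u''" for b u'' r''
  proof (cases "(b, u'') = (a, u')")
    case True
    then show ?thesis using dup_wins_SConf_DConf[OF assms(2) move.S1] by simp
  next
    case False
    with that have "move tr tau E (SConf (u, v) (Some (a, u')) (Some (v, Frown)) r)
        (DConf (u, v) (Some (b, u'')) (Some (v, Frown)) Check)" by (intro move.S2b) auto
    then show ?thesis by (rule dup_wins_SConf_DConf[OF assms(2)])
  qed
  fix d assume "move tr tau E (SConf (u, v) None None r') d"
  then show "dup_wins d"
  proof (cases rule: move_SConfE)
    case (S3 b v')
    then show ?thesis using dup_wins_SConf_DConf[OF assms(2) move.S3] by simp
  qed (simp_all add: repeat)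
qed simp

text \<open>Against a pending Smile challenge (a, u) at u, Spoiler has every move of the fresh
  configuration except posing (a, u) itself, which is only possible if u \<midarrow>a\<rightarrow> u.\<close>

lemma dup_wins_fresh_of_Smile_loop:
  assumes "dup_wins (SConf (u, v) (Some (a, u)) (Some (v, Smile)) r)"
    and "tr u a u \<Longrightarrow> dup_wins (DConf (u, v) (Some (a, u)) (Some (v, Frown)) Star)"
  shows "dup_wins (SConf (u, v) None None r')"
proof (rule dup_wins_SpoilerI)
  have repeat: "dup_wins (DConf (u, v) (Some (b, u')) (Some (v, Frown)) r'')" if "tr u b u'" for b u' r''
  proof (cases "(b, u') = (a, u)")
    case True
    then show ?thesis using assms(2) that dup_wins_DConf_reward by blast
  next
    case False
    with that have "move tr tau E (SConf (u, v) (Some (a, u)) (Some (v, Smile)) r)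
        (DConf (u, v) (Some (b, u')) (Some (v, Frown)) Check)" by (intro move.S2b) auto
    then show ?thesis by (rule dup_wins_SConf_DConf[OF assms(1)])
  qed
  fix d assume "move tr tau E (SConf (u, v) None None r') d"
  then show "dup_wins d"
  proof (cases rule: move_SConfE)
    case (S3 b v')
    then show ?thesis using dup_wins_SConf_DConf[OF assms(1) move.S3] by simp
  qed (simp_all add: repeat)
qed simp

lemma dup_wins_Frown_of_Smile:
  assumes "dup_wins (SConf (u, v) (Some (a, u)) (Some (v, Smile)) r)"
    and "dup_wins (DConf (u, v) (Some (a, u)) (Some (v, Frown)) Star)"
  shows "dup_wins (SConf (u, v) (Some (a, u)) (Some (v, Frown)) r')"
proof (rule dup_wins_SpoilerI)
  fix d assume "move tr tau E (SConf (u, v) (Some (a, u)) (Some (v, Frown)) r') d"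
  then show "dup_wins d"
  proof (cases rule: move_SConfE)
    case S1
    then show ?thesis using assms(2) by simp
  next
    case (S2b b u')
    then show ?thesis using dup_wins_SConf_DConf[OF assms(1) move.S2b] by simp
  next
    case (S3 b v')
    then show ?thesis using dup_wins_SConf_DConf[OF assms(1) move.S3] by simp
  qed simp
qed simp

text \<open>Since Smile \<notin> E, Duplicator facing the repeated Smile challenge can only \<tau>-step (D3a) until
  she leaves by D1 or D3b; each of these moves is also available against the Frown challenge, so her
  win carries back along the \<tau>-steps.\<close>

lemma dup_wins_Frown_answer_of_Smile:
  assumes "Smile \<notin> E" and loop: "tr u a u"
    and "dup_wins (SConf (u, v0) (Some (a, u)) (Some (v0, Smile)) Star)"
  shows "dup_wins (DConf (u, v0) (Some (a, u)) (Some (v0, Frown)) Star)"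
proof -
  define answer where "answer v \<longleftrightarrow> dup_wins (DConf (u, v) (Some (a, u)) (Some (v, Frown)) Star)" for v
  have idle: "answer v" if "tr v tau v'" and "dup_wins (SConf (u, v') (Some (a, u)) (Some (v', Frown)) Star)" for v v'
    unfolding answer_def using that by (intro dup_wins_DuplicatorI[OF _ move.D3a]) auto
  have "answer v0"
  proof (rule dup_wins_repeated_challenge
      [where Inv = "\<lambda>p m. \<exists>v. p = (u, v) \<and> m = Some (v, Smile) \<and> (answer v \<longrightarrow> answer v0)"])
    fix p m c
    assume "\<exists>v. p = (u, v) \<and> m = Some (v, Smile) \<and> (answer v \<longrightarrow> answer v0)"
    then obtain v where p: "p = (u, v)" and m: "m = Some (v, Smile)" and lift: "answer v \<Longrightarrow> answer v0"
      by blast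
    assume "move tr tau E (DConf p (Some (a, u)) m Star) c" and c: "dup_wins c"
    then have "move tr tau E (DConf (u, v) (Some (a, u)) (Some (v, Smile)) Star) c" by (simp add: p m)
    then show "answer v0 \<or> (\<exists>p' m'. c = SConf p' (Some (a, u)) m' Star \<and>
        (\<exists>v. p' = (u, v) \<and> m' = Some (v, Smile) \<and> (answer v \<longrightarrow> answer v0)))"
    proof (cases rule: move_DConfE)
      case D1
      with c have "answer v" unfolding answer_def by (intro dup_wins_DuplicatorI[OF _ move.D1]) auto
      then show ?thesis by (rule disjI1[OF lift])
    next
      case (D3a v')
      have "answer v" if "answer v'"
        using idle[OF D3a(1) dup_wins_Frown_of_Smile] c that D3a(2) unfolding answer_def by simp
      with D3a(2) lift show ?thesis by blast
    next
      case (D3b v')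
      with c have "dup_wins (SConf (u, v') (Some (a, u)) (Some (v', Frown)) Star)"
        by (intro dup_wins_Frown_of_fresh[OF loop]) simp
      with D3b(1) show ?thesis using lift idle by blast
    qed (use \<open>Smile \<notin> E\<close> in simp_all)
  qed (use assms(3) in auto)
  then show ?thesis unfolding answer_def .
qed

lemma dup_wins_fresh_of_Smile:
  assumes "Smile \<notin> E" and "dup_wins (SConf (u, v) (Some (a, u)) (Some (v, Smile)) Star)"
  shows "dup_wins (SConf (u, v) None None r)"
  using assms by (intro dup_wins_fresh_of_Smile_loop dup_wins_Frown_answer_of_Smile)

lemma dup_wins_Smile_tau_answer:
  assumes "dup_wins (SConf p0 (Some (a, s')) (Some (v0, Smile)) Star)"
  shows "\<exists>t'. tau_steps tr tau v0 t' \<and> dup_wins (SConf (s', t') None None Star)"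
proof (rule dup_wins_repeated_challenge
    [where Inv = "\<lambda>p m. \<exists>vb. m = Some (vb, Smile) \<and> tau_steps tr tau v0 vb"])
  fix p :: "'s \<times> 's" and m c
  assume "\<exists>vb. m = Some (vb, Smile) \<and> tau_steps tr tau v0 vb"
  then obtain vb where m: "m = Some (vb, Smile)" and vb: "tau_steps tr tau v0 vb" by blast
  obtain u w where p: "p = (u, w)" by fastforce
  assume "move tr tau E (DConf p (Some (a, s')) m Star) c" and c: "dup_wins c"
  then have "move tr tau E (DConf (u, w) (Some (a, s')) (Some (vb, Smile)) Star) c" by (simp add: p m)
  then show "(\<exists>t'. tau_steps tr tau v0 t' \<and> dup_wins (SConf (s', t') None None Star)) \<or>
      (\<exists>p' m'. c = SConf p' (Some (a, s')) m' Star \<and> (\<exists>vb. m' = Some (vb, Smile) \<and> tau_steps tr tau v0 vb))"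
  proof (cases rule: move_DConfE)
    case D1
    with c vb show ?thesis by blast
  next
    case (D3a v')
    with vb tau_steps_snoc show ?thesis by blast
  next
    case (D3b v')
    with c vb tau_steps_snoc show ?thesis by (blast intro: dup_wins_SConf_reward)
  next
    case (D3c v')
    with vb tau_steps_snoc show ?thesis by blast
  qed simp_all
qed (use assms tau_steps_refl in auto)

lemma equiv_ed_transfer:
  assumes Frown: "Frown \<in> E \<Longrightarrow> x = ObO" and Smile: "Smile \<in> E \<Longrightarrow> y = ObO"
    and st: "equiv_ed tr tau E s t" and s': "tr s a s'"
  shows "(a = tau \<and> equiv_ed tr tau E s' t) \<or>
    (\<exists>t' t1 t2. wstep tr tau x (equiv_ed tr tau E) s t t1 \<and> tr t1 a t2 \<and>
       wstep tr tau y (equiv_ed tr tau E) s' t2 t' \<and> equiv_ed tr tau E s' t')"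
    (is "?transfer")
proof -
  let ?R = "equiv_ed tr tau E"
  have answer: ?transfer
    if "wstep tr tau x ?R s t t1" "tr t1 a t2" "tau_steps tr tau t2 t'"
      "y = ObB \<Longrightarrow> ?R s' t2" "?R s' t'" for t1 t2 t'
    using that unfolding wstep_def by blast
  have answer_Smile: ?transfer
    if step: "wstep tr tau x ?R s t t1" "tr t1 a t2" "y = ObB \<Longrightarrow> ?R s' t2"
      and Smile_challenge: "dup_wins (SConf p (Some (a, s')) (Some (t2, Smile)) Star)" for t1 t2 p
  proof -
    obtain t' where "tau_steps tr tau t2 t'" and "dup_wins (SConf (s', t') None None Star)"
      using dup_wins_Smile_tau_answer[OF Smile_challenge] by blast
    with step show ?thesis by (intro answer) (auto simp: equiv_ed_iff_dup_wins)
  qed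
  have answer_fresh: ?transfer
    if "wstep tr tau x ?R s t t1" "tr t1 a t2" "dup_wins (SConf (s', t2) None None r)" for t1 t2 r
    using that tau_steps_refl dup_wins_SConf_reward
    by (intro answer[of t1 t2 t2]) (auto simp: equiv_ed_iff_dup_wins)
  have idle_step: "wstep tr tau x ?R s t v'"
    if "wstep tr tau x ?R s t vb" "tr vb tau v'" "x = ObB \<Longrightarrow> ?R s v'" for vb v'
    using that tau_steps_snoc unfolding wstep_def by blast
  \<comment> \<open>The \<tau>-predecessor t1 of vb is kept for the case a = \<tau>, where Duplicator may answer by D1 at vb.\<close>
  show ?thesis
  proof (rule dup_wins_repeated_challenge[where Inv = "\<lambda>p m. \<exists>w vb. p = (s, w) \<and> m = Some (vb, Frown) \<and>
      wstep tr tau x ?R s t vb \<and> (vb = t \<or> (\<exists>t1. wstep tr tau x ?R s t t1 \<and> tr t1 tau vb))"])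
    show "dup_wins (SConf (s, t) (Some (a, s')) (Some (t, Frown)) Star)"
      using st s' by (simp add: equiv_ed_iff_dup_wins dup_wins_Frown_of_fresh)
    show "\<exists>w vb. (s, t) = (s, w) \<and> Some (t, Frown) = Some (vb, Frown) \<and>
        wstep tr tau x ?R s t vb \<and> (vb = t \<or> (\<exists>t1. wstep tr tau x ?R s t t1 \<and> tr t1 tau vb))"
      using st tau_steps_refl unfolding wstep_def by blast
  next
    fix p :: "'s \<times> 's" and m c
    assume "\<exists>w vb. p = (s, w) \<and> m = Some (vb, Frown) \<and>
        wstep tr tau x ?R s t vb \<and> (vb = t \<or> (\<exists>t1. wstep tr tau x ?R s t t1 \<and> tr t1 tau vb))"
    then obtain w vb where p: "p = (s, w)" and m: "m = Some (vb, Frown)"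
      and vb: "wstep tr tau x ?R s t vb"
      and vb_pred: "vb = t \<or> (\<exists>t1. wstep tr tau x ?R s t t1 \<and> tr t1 tau vb)"
      by blast
    assume "move tr tau E (DConf p (Some (a, s')) m Star) c" and c: "dup_wins c"
    then have "move tr tau E (DConf (s, w) (Some (a, s')) (Some (vb, Frown)) Star) c" by (simp add: p m)
    then show "?transfer \<or> (\<exists>p' m'. c = SConf p' (Some (a, s')) m' Star \<and> (\<exists>w vb. p' = (s, w) \<and>
        m' = Some (vb, Frown) \<and> wstep tr tau x ?R s t vb \<and>
        (vb = t \<or> (\<exists>t1. wstep tr tau x ?R s t t1 \<and> tr t1 tau vb))))"
    proof (cases rule: move_DConfE)
      case D1
      with c have "?R s' vb" by (simp add: equiv_ed_iff_dup_wins)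
      with vb_pred D1(1) answer[OF _ _ tau_steps_refl] show ?thesis by blast
    next
      case (D2a v')
      have "?R s' v'" if "y = ObB"
        using Smile that c D2a(3) dup_wins_fresh_of_Smile by (auto simp: equiv_ed_iff_dup_wins)
      with D2a c answer_Smile[OF vb] show ?thesis by blast
    next
      case (D2b v')
      with c answer_fresh[OF vb] show ?thesis by blast
    next
      case (D2c v')
      with c Smile answer_Smile[OF vb] show ?thesis by blast
    next
      case (D3a v')
      with c s' have "?R s v'" by (simp add: equiv_ed_iff_dup_wins dup_wins_fresh_of_Frown)
      with D3a vb idle_step show ?thesis by blast
    next
      case (D3c v')
      with Frown vb idle_step show ?thesis by blast
    qed simp
  qed
qed

end

theorem lemma6p8:
  fixes tr :: "'s \<Rightarrow> 'a \<Rightarrow> 's \<Rightarrow> bool" and tau :: 'a and x y :: ob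
  shows "generic_bisim tr tau x y (equiv_ed tr tau (Exy x y))"
  unfolding generic_bisim_def
proof (intro conjI allI impI)
  show "symp (equiv_ed tr tau (Exy x y))"
    by (rule sympI) (simp add: equiv_ed_iff_dup_wins dup_wins_fresh_swap)
next
  fix s t a s'
  assume "equiv_ed tr tau (Exy x y) s t" and "tr s a s'"
  then show "a = tau \<and> equiv_ed tr tau (Exy x y) s' t \<or>
      (\<exists>t' t1 t2. wstep tr tau x (equiv_ed tr tau (Exy x y)) s t t1 \<and> tr t1 a t2 \<and>
        wstep tr tau y (equiv_ed tr tau (Exy x y)) s' t2 t' \<and> equiv_ed tr tau (Exy x y) s' t')"
    by (intro equiv_ed_transfer) (auto simp: Exy_def)
qed

end
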